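(* Let $(y_1,z_1)$ be a nontrivial solution of $$\ddot y_1+3y_1+\tfrac32y_1^3+\tfrac92y_1z_1^2=0,\qquad \ddot z_1+9z_1+\tfrac92z_1^3+\tfrac{27}{2}z_1y_1^2=0.$$ Let $t_1<t_2$ be two consecutive critical points of $y_1(t)$. Then there exists $\tau\in(t_1,t_2)$ such that $z_1(\tau)=0$. *)

theory Defs
  imports "HOL-Analysis.Analysis"
begin

end

theory Submission
  imports Defs
begin

text \<open>Suppose \<open>z\<close> has no zero in \<open>(t1, t2)\<close>, and normalise signs so that \<open>y' > 0\<close> and
  \<open>z > 0\<close> there. The mixed energy \<open>V = y' z' + 3 y z + 3/2 y^3 z + 3/2 y z^3\<close> has derivative
  \<open>-y' z (6 + 9 y^2 + 3 z^2) < 0\<close>, so \<open>V t2 < V t1\<close>. At a critical point of \<open>y\<close> we have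
  \<open>V = y z (3 + 3/2 y^2 + 3/2 z^2)\<close>. Since \<open>y'\<close> rises from \<open>0\<close> at \<open>t1\<close> and falls back to \<open>0\<close>
  at \<open>t2\<close>, and \<open>y''\<close> has the opposite sign of \<open>y\<close>, we get \<open>y t1 \<le> 0 \<le> y t2\<close>, hence
  \<open>V t1 \<le> 0 \<le> V t2\<close>: a contradiction.\<close>

lemma continuous_nonzero_on_connected_sign:
  fixes f :: "'a::topological_space \<Rightarrow> real"
  assumes "connected S" "continuous_on S f" "\<forall>x\<in>S. f x \<noteq> 0" "x \<in> S" "y \<in> S"
  shows "0 < f x * f y"
proof (rule ccontr)
  assume "\<not> 0 < f x * f y"
  then have "f x \<le> 0 \<and> 0 \<le> f y \<or> f y \<le> 0 \<and> 0 \<le> f x"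
    by (auto simp: not_less mult_le_0_iff)
  moreover have "is_interval (f ` S)"
    using assms(1,2) connected_continuous_image is_interval_connected_1 by blast
  moreover have "f x \<in> f ` S" "f y \<in> f ` S"
    using assms(4,5) by auto
  ultimately have "0 \<in> f ` S"
    unfolding is_interval_1 by meson
  then show False
    using assms(3) by auto
qed

lemma has_real_derivative_nonneg_at_left_end_min:
  assumes "(f has_real_derivative D) (at a)" "a < b" "\<forall>x\<in>{a<..<b}. f a \<le> f x"
  shows "0 \<le> D"
proof -
  have "((\<lambda>x. (f x - f a) / (x - a)) \<longlongrightarrow> D) (at_right a)"
    using assms(1) unfolding has_field_derivative_iff
    by (rule tendsto_mono[rotated]) (rule at_le, simp)
  moreover have "\<forall>\<^sub>F x in at_right a. 0 \<le> (f x - f a) / (x - a)"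
    using eventually_at_right_real[OF assms(2)]
    by eventually_elim (use assms(3) in auto)
  ultimately show ?thesis
    by (rule tendsto_lowerbound) simp
qed

lemma has_real_derivative_nonpos_at_right_end_min:
  assumes "(f has_real_derivative D) (at b)" "a < b" "\<forall>x\<in>{a<..<b}. f b \<le> f x"
  shows "D \<le> 0"
proof -
  have "((\<lambda>x. (f x - f b) / (x - b)) \<longlongrightarrow> D) (at_left b)"
    using assms(1) unfolding has_field_derivative_iff
    by (rule tendsto_mono[rotated]) (rule at_le, simp)
  moreover have "\<forall>\<^sub>F x in at_left b. (f x - f b) / (x - b) \<le> 0"
    using eventually_at_left_real[OF assms(2)]
    by eventually_elim (use assms(3) in \<open>auto simp: divide_nonneg_neg\<close>)
  ultimately show ?thesis
    by (rule tendsto_upperbound) simp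
qed

locale cubic_coupled_solution =
  fixes y z y' z' y'' z'' :: "real \<Rightarrow> real"
  assumes dy: "\<And>t. (y has_real_derivative y' t) (at t)"
      and dy': "\<And>t. (y' has_real_derivative y'' t) (at t)"
      and dz: "\<And>t. (z has_real_derivative z' t) (at t)"
      and dz': "\<And>t. (z' has_real_derivative z'' t) (at t)"
      and ode_y: "\<And>t. y'' t + 3 * y t + 3/2 * (y t)^3 + 9/2 * y t * (z t)^2 = 0"
      and ode_z: "\<And>t. z'' t + 9 * z t + 9/2 * (z t)^3 + 27/2 * z t * (y t)^2 = 0"
begin

text \<open>The terms of the derivative containing \<open>z'\<close> add up to \<open>z'\<close> times the
  equation for \<open>y\<close>, so they cancel.\<close>

definition mixed_energy :: "real \<Rightarrow> real" where
  "mixed_energy t = y' t * z' t + 3 * y t * z t + 3/2 * (y t)^3 * z t + 3/2 * y t * (z t)^3"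

lemma mixed_energy_has_derivative:
  "(mixed_energy has_real_derivative - y' t * z t * (6 + 9 * (y t)^2 + 3 * (z t)^2)) (at t)"
proof -
  have "(mixed_energy has_real_derivative
      y'' t * z' t + y' t * z'' t + 3 * (y' t * z t + y t * z' t)
      + 3/2 * (3 * (y t)^2 * y' t * z t + (y t)^3 * z' t)
      + 3/2 * (y' t * (z t)^3 + 3 * y t * (z t)^2 * z' t)) (at t)"
    unfolding mixed_energy_def [abs_def]
    by (auto intro!: derivative_eq_intros dy dy' dz dz' simp: field_simps power2_eq_square power3_eq_cube)
  moreover have "y'' t = - 3 * y t - 3/2 * (y t)^3 - 9/2 * y t * (z t)^2"
    and "z'' t = - 9 * z t - 9/2 * (z t)^3 - 27/2 * z t * (y t)^2"
    using ode_y[of t] ode_z[of t] by linarith+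
  ultimately show ?thesis
    by (simp add: algebra_simps power2_eq_square power3_eq_cube)
qed

lemma mixed_energy_at_critical_point:
  assumes "y' t = 0"
  shows "mixed_energy t = y t * z t * (3 + 3/2 * (y t)^2 + 3/2 * (z t)^2)"
  using assms by (simp add: mixed_energy_def algebra_simps power2_eq_square power3_eq_cube)

lemma scaled_y''_nonneg_iff: "0 \<le> c * y'' t \<longleftrightarrow> c * y t \<le> 0"
proof -
  define P where "P = 3 + 3/2 * (y t)^2 + 9/2 * (z t)^2"
  have "y'' t = - y t * P"
    using ode_y[of t] by (simp add: P_def algebra_simps power2_eq_square power3_eq_cube)
  then have "c * y'' t = - ((c * y t) * P)"
    by simp
  moreover have "0 < P"
    by (simp add: P_def add_pos_nonneg)
  ultimately show ?thesis
    by (auto simp: mult_le_0_iff)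
qed

lemma y_signs_at_consecutive_critical_points:
  assumes t12: "t1 < t2" and crit1: "y' t1 = 0" and crit2: "y' t2 = 0"
    and y'_sign: "\<forall>t\<in>{t1<..<t2}. 0 < c * y' t"
  shows "c * y t1 \<le> 0" and "0 \<le> c * y t2"
proof -
  have "0 \<le> c * y'' t1"
    using has_real_derivative_nonneg_at_left_end_min[OF DERIV_cmult[OF dy'] t12] y'_sign crit1
    by (simp add: less_imp_le)
  then show "c * y t1 \<le> 0"
    by (simp add: scaled_y''_nonneg_iff)
  have "c * y'' t2 \<le> 0"
    using has_real_derivative_nonpos_at_right_end_min[OF DERIV_cmult[OF dy'] t12] y'_sign crit2
    by (simp add: less_imp_le)
  then show "0 \<le> c * y t2"
    using scaled_y''_nonneg_iff[of "- c" t2] by simp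
qed

lemma scaled_mixed_energy_decreasing:
  assumes t12: "t1 < t2"
    and y'_sign: "\<forall>t\<in>{t1<..<t2}. 0 < c * y' t" and z_sign: "\<forall>t\<in>{t1<..<t2}. 0 < d * z t"
  shows "c * d * mixed_energy t2 < c * d * mixed_energy t1"
proof (rule DERIV_neg_imp_decreasing_open[OF t12])
  fix t assume "t1 < t" "t < t2"
  then have "0 < (c * y' t) * (d * z t) * (6 + 9 * (y t)^2 + 3 * (z t)^2)"
    using y'_sign z_sign by (simp add: add_pos_nonneg)
  then show "\<exists>D. ((\<lambda>t. c * d * mixed_energy t) has_real_derivative D) (at t) \<and> D < 0"
    using DERIV_cmult[OF mixed_energy_has_derivative, of "c * d" t]
    by (intro exI conjI) (auto simp: algebra_simps)
next
  show "continuous_on {t1..t2} (\<lambda>t. c * d * mixed_energy t)"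
    using mixed_energy_has_derivative
    by (intro continuous_intros continuous_at_imp_continuous_on) (auto intro: DERIV_isCont)
qed

lemma z_has_zero_between_critical_points:
  assumes t12: "t1 < t2" and crit1: "y' t1 = 0" and crit2: "y' t2 = 0"
    and consecutive: "\<forall>t\<in>{t1<..<t2}. y' t \<noteq> 0"
  shows "\<exists>\<tau>\<in>{t1<..<t2}. z \<tau> = 0"
proof (rule ccontr)
  assume "\<not> ?thesis"
  then have z_nonzero: "\<forall>t\<in>{t1<..<t2}. z t \<noteq> 0"
    by auto
  define m where "m = (t1 + t2) / 2"
  have m: "m \<in> {t1<..<t2}"
    using t12 by (simp add: m_def)
  define a where "a = y' m"
  define b where "b = z m"
  have cont_y': "continuous_on S y'" and cont_z: "continuous_on S z" for S
    using dy' dz by (meson DERIV_isCont continuous_at_imp_continuous_on)+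
  have y'_sign: "\<forall>t\<in>{t1<..<t2}. 0 < a * y' t"
    using continuous_nonzero_on_connected_sign[OF _ cont_y' consecutive m] by (simp add: a_def)
  have z_sign: "\<forall>t\<in>{t1<..<t2}. 0 < b * z t"
    using continuous_nonzero_on_connected_sign[OF _ cont_z z_nonzero m] by (simp add: b_def)
  have z_sign_closed: "0 \<le> b * z t" if "t \<in> {t1..t2}" for t
  proof (rule continuous_ge_on_closure[of "{t1<..<t2}" "\<lambda>t. b * z t"])
    show "continuous_on (closure {t1<..<t2}) (\<lambda>t. b * z t)"
      by (intro continuous_intros cont_z)
    show "t \<in> closure {t1<..<t2}"
      using that t12 by simp
    show "0 \<le> b * z s" if "s \<in> {t1<..<t2}" for s
      using z_sign that by (simp add: less_imp_le)
  qed
  note y_signs = y_signs_at_consecutive_critical_points[OF t12 crit1 crit2 y'_sign]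
  have W_critical: "a * b * mixed_energy t = (a * y t) * (b * z t) * (3 + 3/2 * (y t)^2 + 3/2 * (z t)^2)"
    if "y' t = 0" for t
    using mixed_energy_at_critical_point[OF that] by (simp add: algebra_simps)
  have "a * b * mixed_energy t1 \<le> 0"
    unfolding W_critical[OF crit1]
    by (rule mult_nonpos_nonneg[OF mult_nonpos_nonneg]) (use y_signs z_sign_closed[of t1] t12 in auto)
  moreover have "0 \<le> a * b * mixed_energy t2"
    unfolding W_critical[OF crit2]
    by (rule mult_nonneg_nonneg[OF mult_nonneg_nonneg]) (use y_signs z_sign_closed[of t2] t12 in auto)
  ultimately show False
    using scaled_mixed_energy_decreasing[OF t12 y'_sign z_sign] by linarith
qed

end

theorem proposition4p2:
  fixes y z y' z' y'' z'' :: "real \<Rightarrow> real" and t1 t2 :: real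
  assumes dy: "\<And>t. (y has_real_derivative y' t) (at t)"
      and dy': "\<And>t. (y' has_real_derivative y'' t) (at t)"
      and dz: "\<And>t. (z has_real_derivative z' t) (at t)"
      and dz': "\<And>t. (z' has_real_derivative z'' t) (at t)"
      and ode_y: "\<And>t. y'' t + 3 * y t + 3/2 * (y t)^3 + 9/2 * y t * (z t)^2 = 0"
      and ode_z: "\<And>t. z'' t + 9 * z t + 9/2 * (z t)^3 + 27/2 * z t * (y t)^2 = 0"
      and nontrivial: "\<exists>t. y t \<noteq> 0 \<or> z t \<noteq> 0"
      and t12: "t1 < t2"
      and crit1: "y' t1 = 0" and crit2: "y' t2 = 0"
      and consecutive: "\<forall>t\<in>{t1<..<t2}. y' t \<noteq> 0"
  shows "\<exists>\<tau>\<in>{t1<..<t2}. z \<tau> = 0"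
proof -
  interpret cubic_coupled_solution y z y' z' y'' z''
    using dy dy' dz dz' ode_y ode_z by unfold_locales
  show ?thesis
    using z_has_zero_between_critical_points[OF t12 crit1 crit2 consecutive] .
qed

end
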